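(* Let $(T,b)$ be a branched ideal triangulation of $(S,V)$ and let $e$ be an edge of $T$ which is ambiguous and untrapped in $(T,b)$. Let $b'$ be the branching obtained from $b$ by reversing the orientation of $e$. Then $(T,b)$ and $(T,b')$ are connected by a sequence of two $b$-flips.
   Context: $S$ is a compact closed connected surface and $V\subset S$ is a finite set of marked points with $\chi(S)-|V|<0$. An ideal triangulation $T$ of $(S,V)$ is a possibly loose triangulation of $S$ with vertex set $V$, obtained by gluing abstract triangles along abstract edges in pairs. A branching $b$ is an orientation of all edges which on each abstract triangle is induced by a total order of its vertices, edges pointing to the larger endpoint. An edge is trapped if it results from identifying two edges of a single abstract triangle, and untrapped otherwise. An edge $e$ is ambiguous in $(T,b)$ if reversing the orientation of $e$ alone yields a branching. A (naked) flip at an untrapped edge $e$ shared by two abstract triangles forming a quadrilateral replaces $e$ by the other diagonal. A $b$-flip is such a flip together with an orientation of the new diagonal such that, all other edges keeping their orientation, the result is branched. *)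

theory Defs
  imports Main
begin

text \<open>
Combinatorial model of an ideal triangulation of a closed surface.
Corners are elements of a type 'c.  An abstract triangle is a 3-element set of
corners (its three corners); distinct triangles have disjoint corner sets.
A dart (x,y) is an oriented side of an abstract triangle, from corner x to corner y.
The gluing maps each dart to the dart it is identified with (x goes to the first
component, y to the second).  Vertices (the marked set V) are the classes of corners
under the identifications; the surface S is the quotient space.
\<close>

record 'c triang =
  tris :: "'c set set"
  glue :: "'c \<times> 'c \<Rightarrow> 'c \<times> 'c"

definition darts :: "'c triang \<Rightarrow> ('c \<times> 'c) set" where
  "darts T = {(x, y). x \<noteq> y \<and> (\<exists>D\<in>tris T. x \<in> D \<and> y \<in> D)}"

definition adjacent :: "'c triang \<Rightarrow> 'c set \<Rightarrow> 'c set \<Rightarrow> bool" where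
  "adjacent T D D' \<longleftrightarrow> (\<exists>z\<in>darts T. fst z \<in> D \<and> fst (glue T z) \<in> D')"

definition wf_triang :: "'c triang \<Rightarrow> bool" where
  "wf_triang T \<longleftrightarrow>
     finite (tris T) \<and> tris T \<noteq> {} \<and>
     (\<forall>D\<in>tris T. card D = 3) \<and>
     (\<forall>D\<in>tris T. \<forall>D'\<in>tris T. D \<noteq> D' \<longrightarrow> D \<inter> D' = {}) \<and>
     (\<forall>z\<in>darts T. glue T z \<in> darts T \<and> glue T (glue T z) = z \<and>
        glue T (prod.swap z) = prod.swap (glue T z) \<and>
        glue T z \<noteq> z \<and> glue T z \<noteq> prod.swap z) \<and>
     (\<forall>D\<in>tris T. \<forall>D'\<in>tris T. (D, D') \<in> {(X, Y). adjacent T X Y}\<^sup>*)"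

definition is_orientation :: "'c triang \<Rightarrow> ('c \<times> 'c) set \<Rightarrow> bool" where
  "is_orientation T Ot \<longleftrightarrow> Ot \<subseteq> darts T \<and>
     (\<forall>z\<in>darts T. (z \<in> Ot) \<noteq> (prod.swap z \<in> Ot)) \<and>
     (\<forall>z\<in>darts T. z \<in> Ot \<longleftrightarrow> glue T z \<in> Ot)"

definition is_branching :: "'c triang \<Rightarrow> ('c \<times> 'c) set \<Rightarrow> bool" where
  "is_branching T Ot \<longleftrightarrow> is_orientation T Ot \<and>
     (\<forall>D\<in>tris T. \<exists>r :: 'c \<Rightarrow> nat. inj_on r D \<and>
        (\<forall>x\<in>D. \<forall>y\<in>D. x \<noteq> y \<longrightarrow> ((x, y) \<in> Ot \<longleftrightarrow> r x < r y)))"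

definition edge_darts :: "'c triang \<Rightarrow> 'c \<times> 'c \<Rightarrow> ('c \<times> 'c) set" where
  "edge_darts T z = {z, prod.swap z, glue T z, prod.swap (glue T z)}"

definition reverse_edge :: "'c triang \<Rightarrow> ('c \<times> 'c) set \<Rightarrow> 'c \<times> 'c \<Rightarrow> ('c \<times> 'c) set" where
  "reverse_edge T Ot z = (Ot - edge_darts T z) \<union> (edge_darts T z - Ot)"

definition trapped :: "'c triang \<Rightarrow> 'c \<times> 'c \<Rightarrow> bool" where
  "trapped T z \<longleftrightarrow> (\<exists>D\<in>tris T. fst z \<in> D \<and> fst (glue T z) \<in> D)"

definition ambiguous :: "'c triang \<Rightarrow> ('c \<times> 'c) set \<Rightarrow> 'c \<times> 'c \<Rightarrow> bool" where
  "ambiguous T Ot z \<longleftrightarrow> is_branching T (reverse_edge T Ot z)"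

text \<open>Renaming of the outer sides of the quadrilateral.  Old triangles {a,p,q} and
{c,p',q'} glued along (p,q) ~ (p',q'); new triangles {xa,xp,xc} and {ya,yq,yc},
new diagonal from a to c.\<close>

definition flip_ren ::
  "'c \<Rightarrow> 'c \<Rightarrow> 'c \<Rightarrow> 'c \<Rightarrow> 'c \<Rightarrow> 'c \<Rightarrow> 'c \<Rightarrow> 'c \<Rightarrow> 'c \<Rightarrow> 'c \<Rightarrow> 'c \<Rightarrow> 'c \<Rightarrow> 'c \<times> 'c \<Rightarrow> 'c \<times> 'c" where
  "flip_ren a p q c p' q' xa xp xc ya yq yc w =
     (if w = (a, p) then (xa, xp) else if w = (p, a) then (xp, xa)
      else if w = (a, q) then (ya, yq) else if w = (q, a) then (yq, ya)
      else if w = (c, p') then (xc, xp) else if w = (p', c) then (xp, xc)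
      else if w = (c, q') then (yc, yq) else if w = (q', c) then (yq, yc)
      else w)"

text \<open>T2 is obtained from T by the (naked) flip at the edge of dart z; rho maps the darts
of T not on the flipped edge to the corresponding darts of T2.\<close>

definition naked_flip ::
  "'c triang \<Rightarrow> 'c \<times> 'c \<Rightarrow> 'c triang \<Rightarrow> ('c \<times> 'c \<Rightarrow> 'c \<times> 'c) \<Rightarrow> bool" where
  "naked_flip T z T2 rho \<longleftrightarrow>
     (\<exists>p q a c p' q' xa xp xc ya yq yc.
        z = (p, q) \<and> {a, p, q} \<in> tris T \<and> a \<notin> {p, q} \<and> p \<noteq> q \<and>
        glue T (p, q) = (p', q') \<and> {c, p', q'} \<in> tris T \<and> c \<notin> {p', q'} \<and>
        {a, p, q} \<noteq> {c, p', q'} \<and>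
        distinct [xa, xp, xc, ya, yq, yc] \<and>
        {xa, xp, xc, ya, yq, yc} \<inter> \<Union>(tris T - {{a, p, q}, {c, p', q'}}) = {} \<and>
        tris T2 = (tris T - {{a, p, q}, {c, p', q'}}) \<union> {{xa, xp, xc}, {ya, yq, yc}} \<and>
        rho = flip_ren a p q c p' q' xa xp xc ya yq yc \<and>
        (\<forall>w\<in>darts T - edge_darts T z. glue T2 (rho w) = rho (glue T w)) \<and>
        glue T2 (xa, xc) = (ya, yc) \<and> glue T2 (xc, xa) = (yc, ya) \<and>
        glue T2 (ya, yc) = (xa, xc) \<and> glue T2 (yc, ya) = (xc, xa))"

definition b_flip ::
  "'c triang \<Rightarrow> ('c \<times> 'c) set \<Rightarrow> 'c triang \<Rightarrow> ('c \<times> 'c) set \<Rightarrow> bool" where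
  "b_flip T Ot T2 Ot2 \<longleftrightarrow>
     (\<exists>z rho. z \<in> darts T \<and> \<not> trapped T z \<and> naked_flip T z T2 rho \<and>
        is_branching T2 Ot2 \<and>
        (\<forall>w\<in>darts T - edge_darts T z. w \<in> Ot \<longleftrightarrow> rho w \<in> Ot2))"

end

theory Submission
  imports Defs
begin

text \<open>Let e = (p, q) lie on the triangles {a, p, q} and {c, p', q'}.  Since reversing e
  alone keeps the branching, a is either below or above both p and q.  Flip e to the
  diagonal (a, c), oriented like (a, p): the new triangle {a, p, c} is acyclic because
  two of its sides leave (or enter) a, and {q, p', q'} is acyclic because (q, p') and
  (q, q') inherit the common orientation of (a, q) and (a, p).  Flipping back at (a, c)
  recovers the quadrilateral, and as only the diagonal is redrawn, its orientation may
  be chosen freely among branchings: in particular the reversed one.\<close>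

lemma card_3_obtain_third:
  assumes "card D = 3" "p \<in> D" "q \<in> D" "p \<noteq> q"
  obtains a where "D = {a, p, q}" "a \<notin> {p, q}"
proof -
  have "finite D" using assms(1) by (metis card.infinite zero_neq_numeral)
  moreover have "{p, q} \<subseteq> D" using assms(2,3) by blast
  ultimately have "card (D - {p, q}) = 1" using assms(1,4) by (simp add: card_Diff_subset)
  then obtain a where "D - {p, q} = {a}" by (rule card_1_singletonE)
  with \<open>{p, q} \<subseteq> D\<close> show thesis by (intro that) blast+
qed

lemma swap_in_darts: "z \<in> darts T \<Longrightarrow> prod.swap z \<in> darts T"
  unfolding darts_def by auto

lemma in_dartsI: "D \<in> tris T \<Longrightarrow> x \<in> D \<Longrightarrow> y \<in> D \<Longrightarrow> x \<noteq> y \<Longrightarrow> (x, y) \<in> darts T"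
  unfolding darts_def by blast

lemma wf_triang_card: "wf_triang T \<Longrightarrow> D \<in> tris T \<Longrightarrow> card D = 3"
  unfolding wf_triang_def by (elim conjE) simp

lemma wf_triang_disjoint:
  "wf_triang T \<Longrightarrow> D \<in> tris T \<Longrightarrow> D' \<in> tris T \<Longrightarrow> D \<noteq> D' \<Longrightarrow> D \<inter> D' = {}"
  unfolding wf_triang_def by (elim conjE) simp

lemma wf_triang_glue:
  assumes "wf_triang T" "w \<in> darts T"
  shows "glue T w \<in> darts T" "glue T (glue T w) = w"
    "glue T (prod.swap w) = prod.swap (glue T w)"
  using assms unfolding wf_triang_def by (elim conjE; simp)+

lemma flip_ren_swap:
  assumes "distinct [a, p, q, c, p', q']"
  shows "flip_ren a p q c p' q' xa xp xc ya yq yc (prod.swap w) =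
         prod.swap (flip_ren a p q c p' q' xa xp xc ya yq yc w)"
proof -
  consider "w \<in> {(a, p), (p, a), (a, q), (q, a), (c, p'), (p', c), (c, q'), (q', c)}"
    | "w \<notin> {(a, p), (p, a), (a, q), (q, a), (c, p'), (p', c), (c, q'), (q', c)}"
    by blast
  then show ?thesis
  proof cases
    case 1
    txt \<open>Orienting all equations between corners by eq_commute lets the distinctness
      facts decide every test of the if-cascade.\<close>
    from 1 assms show ?thesis unfolding flip_ren_def by (elim insertE emptyE; simp add: eq_commute)
  next
    case 2
    then have "prod.swap w \<notin> {(a, p), (p, a), (a, q), (q, a), (c, p'), (p', c), (c, q'), (q', c)}"
      by (cases w) auto
    with 2 show ?thesis unfolding flip_ren_def by simp
  qed
qed

lemma flip_ren_outside:
  "fst w \<notin> {a, p, q, c, p', q'} \<Longrightarrow> flip_ren a p q c p' q' xa xp xc ya yq yc w = w"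
  by (cases w) (auto simp: flip_ren_def)

text \<open>Rank each corner by the number of sides pointing into it.\<close>

lemma acyclic_triangle_ranking:
  assumes "x \<noteq> y" "y \<noteq> z" "x \<noteq> z"
    and "((x, y) \<in> R) \<noteq> ((y, x) \<in> R)" "((y, z) \<in> R) \<noteq> ((z, y) \<in> R)"
      "((x, z) \<in> R) \<noteq> ((z, x) \<in> R)"
    and "\<not> ((x, y) \<in> R \<and> (y, z) \<in> R \<and> (z, x) \<in> R)"
      "\<not> ((x, z) \<in> R \<and> (z, y) \<in> R \<and> (y, x) \<in> R)"
  shows "\<exists>r :: 'a \<Rightarrow> nat. inj_on r {x, y, z} \<and>
           (\<forall>u\<in>{x, y, z}. \<forall>v\<in>{x, y, z}. u \<noteq> v \<longrightarrow> ((u, v) \<in> R \<longleftrightarrow> r u < r v))"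
proof -
  define ix :: nat where "ix = (if (y, x) \<in> R then 1 else 0) + (if (z, x) \<in> R then 1 else 0)"
  define iy :: nat where "iy = (if (x, y) \<in> R then 1 else 0) + (if (z, y) \<in> R then 1 else 0)"
  define iz :: nat where "iz = (if (x, z) \<in> R then 1 else 0) + (if (y, z) \<in> R then 1 else 0)"
  define r where "r u = (if u = x then ix else if u = y then iy else iz)" for u
  have "ix \<noteq> iy" "iy \<noteq> iz" "ix \<noteq> iz"
    "(x, y) \<in> R \<longleftrightarrow> ix < iy" "(y, x) \<in> R \<longleftrightarrow> iy < ix"
    "(x, z) \<in> R \<longleftrightarrow> ix < iz" "(z, x) \<in> R \<longleftrightarrow> iz < ix"
    "(y, z) \<in> R \<longleftrightarrow> iy < iz" "(z, y) \<in> R \<longleftrightarrow> iz < iy"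
    using assms unfolding ix_def iy_def iz_def
    by (cases "(x, y) \<in> R"; cases "(y, z) \<in> R"; cases "(x, z) \<in> R"; simp)+
  with assms(1-3) show ?thesis
    by (intro exI[of _ r]) (auto simp: r_def inj_on_def)
qed

lemma branching_trans:
  fixes T :: "'c triang"
  assumes "is_branching T b" "D \<in> tris T" "x \<in> D" "y \<in> D" "z \<in> D" "x \<noteq> z"
    and "(x, y) \<in> b" "(y, z) \<in> b"
  shows "(x, z) \<in> b"
proof -
  have "x \<noteq> y" "y \<noteq> z" using assms(1,7,8) unfolding is_branching_def is_orientation_def darts_def
    by auto
  moreover obtain r :: "'c \<Rightarrow> nat" where
    "\<forall>u\<in>D. \<forall>v\<in>D. u \<noteq> v \<longrightarrow> ((u, v) \<in> b \<longleftrightarrow> r u < r v)"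
    using assms(1,2) unfolding is_branching_def by blast
  ultimately show ?thesis using assms(3-8) by (metis less_trans)
qed

text \<open>Otherwise transitivity through a fixes the orientation of (p, q) in both b and its
  reversal.\<close>

lemma ambiguous_third_corner:
  assumes br: "is_branching T b" and amb: "ambiguous T b (p, q)"
    and D: "{a, p, q} \<in> tris T" and a: "a \<notin> {p, q}" and pq: "p \<noteq> q"
    and ed: "edge_darts T (p, q) \<inter> {(a, p), (a, q), (p, a), (q, a)} = {}"
  shows "(a, p) \<in> b \<longleftrightarrow> (a, q) \<in> b"
proof -
  define b' where "b' = reverse_edge T b (p, q)"
  have br': "is_branching T b'" using amb unfolding ambiguous_def b'_def .
  have keep: "w \<in> b' \<longleftrightarrow> w \<in> b" if "w \<in> {(a, p), (a, q), (p, a), (q, a)}" for w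
    using ed that unfolding b'_def reverse_edge_def by blast
  have flip: "(q, p) \<in> b' \<longleftrightarrow> (q, p) \<notin> b" "(p, q) \<in> b' \<longleftrightarrow> (p, q) \<notin> b"
    unfolding b'_def reverse_edge_def edge_darts_def by auto
  have darts: "(a, p) \<in> darts T" "(a, q) \<in> darts T" using D a unfolding darts_def by auto
  have orient: "\<And>B w. is_branching T B \<Longrightarrow> w \<in> darts T \<Longrightarrow> (w \<in> B) \<noteq> (prod.swap w \<in> B)"
    unfolding is_branching_def is_orientation_def by blast
  have "False" if "(a, p) \<in> b" "(q, a) \<in> b"
  proof -
    have "(q, p) \<in> b" using branching_trans[OF br D, of q a p] that pq by simp
    moreover have "(q, p) \<in> b'" using branching_trans[OF br' D, of q a p] that keep pq by simp
    ultimately show False using flip by simp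
  qed
  moreover have "False" if "(p, a) \<in> b" "(a, q) \<in> b"
  proof -
    have "(p, q) \<in> b" using branching_trans[OF br D, of p a q] that pq by simp
    moreover have "(p, q) \<in> b'" using branching_trans[OF br' D, of p a q] that keep pq by simp
    ultimately show False using flip by simp
  qed
  ultimately show ?thesis using orient[OF br darts(1)] orient[OF br darts(2)] by auto
qed

text \<open>Two distinct triangles {a, p, q} and {c, p', q'} glued along (p, q) \<sim> (p', q').
  The flip at this edge reuses the corners: its new triangles are {a, p, c} and
  {q, p', q'}, glued along the new diagonal (a, c) \<sim> (q, q'), and the flip of the
  result at (a, c) gives back T itself.\<close>

locale quadrilateral =
  fixes T :: "'c triang" and a p q c p' q' :: 'c
  assumes wf: "wf_triang T"
    and tri_left: "{a, p, q} \<in> tris T" and tri_right: "{c, p', q'} \<in> tris T"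
    and corners_distinct: "distinct [a, p, q, c, p', q']"
    and glue_pq: "glue T (p, q) = (p', q')"
begin

abbreviation old_diagonal :: "('c \<times> 'c) set" where
  "old_diagonal \<equiv> {(p, q), (q, p), (p', q'), (q', p')}"

abbreviation new_diagonal :: "('c \<times> 'c) set" where
  "new_diagonal \<equiv> {(a, c), (c, a), (q, q'), (q', q)}"

abbreviation old_sides :: "('c \<times> 'c) set" where
  "old_sides \<equiv> {(a, p), (p, a), (a, q), (q, a), (c, p'), (p', c), (c, q'), (q', c)}"

abbreviation new_sides :: "('c \<times> 'c) set" where
  "new_sides \<equiv> {(a, p), (p, a), (p, c), (c, p), (q, p'), (p', q), (p', q'), (q', p')}"

definition other_tris :: "'c set set" where
  "other_tris = tris T - {{a, p, q}, {c, p', q'}}"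

definition other_darts :: "('c \<times> 'c) set" where
  "other_darts = {(x, y). x \<noteq> y \<and> (\<exists>D\<in>other_tris. x \<in> D \<and> y \<in> D)}"

definition rho :: "'c \<times> 'c \<Rightarrow> 'c \<times> 'c" where
  "rho = flip_ren a p q c p' q' a p c q p' q'"

definition rho_back :: "'c \<times> 'c \<Rightarrow> 'c \<times> 'c" where
  "rho_back = flip_ren p a c p' q q' p a q p' c q'"

definition flipped_glue :: "'c \<times> 'c \<Rightarrow> 'c \<times> 'c" where
  "flipped_glue w =
     (if w = (a, c) then (q, q') else if w = (c, a) then (q', q)
      else if w = (q, q') then (a, c) else if w = (q', q) then (c, a)
      else rho (glue T (rho_back w)))"

definition flipped :: "'c triang" where
  "flipped = \<lparr>tris = other_tris \<union> {{a, p, c}, {q, p', q'}}, glue = flipped_glue\<rparr>"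

definition flipped_orientation :: "('c \<times> 'c) set \<Rightarrow> ('c \<times> 'c) set" where
  "flipped_orientation b = {w \<in> darts flipped.
     if w \<in> new_diagonal then (w \<in> {(a, c), (q, q')} \<longleftrightarrow> (a, p) \<in> b) else rho_back w \<in> b}"

lemma corners_neq:
  "a \<noteq> p" "a \<noteq> q" "a \<noteq> c" "a \<noteq> p'" "a \<noteq> q'" "p \<noteq> a"
  "p \<noteq> q" "p \<noteq> c" "p \<noteq> p'" "p \<noteq> q'" "q \<noteq> a" "q \<noteq> p"
  "q \<noteq> c" "q \<noteq> p'" "q \<noteq> q'" "c \<noteq> a" "c \<noteq> p" "c \<noteq> q"
  "c \<noteq> p'" "c \<noteq> q'" "p' \<noteq> a" "p' \<noteq> p" "p' \<noteq> q" "p' \<noteq> c"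
  "p' \<noteq> q'" "q' \<noteq> a" "q' \<noteq> p" "q' \<noteq> q" "q' \<noteq> c" "q' \<noteq> p'"
  using corners_distinct by auto

lemma pq_in_darts: "(p, q) \<in> darts T"
  using tri_left corners_neq by (auto intro: in_dartsI)

lemma glue_old_diagonal:
  "glue T (q, p) = (q', p')" "glue T (p', q') = (p, q)" "glue T (q', p') = (q, p)"
  using wf_triang_glue[OF wf pq_in_darts] wf_triang_glue[OF wf wf_triang_glue(1)[OF wf pq_in_darts]]
    glue_pq
  by simp_all

lemma edge_darts_pq: "edge_darts T (p, q) = old_diagonal"
  unfolding edge_darts_def glue_pq by auto

lemma corner_notin_other:
  assumes "D \<in> other_tris" "x \<in> D"
  shows "x \<notin> {a, p, q, c, p', q'}"
proof -
  have "D \<inter> {a, p, q} = {}" "D \<inter> {c, p', q'} = {}"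
    using assms(1) wf_triang_disjoint[OF wf] tri_left tri_right unfolding other_tris_def by auto
  with assms(2) show ?thesis by blast
qed

lemma other_dartsI: "D \<in> other_tris \<Longrightarrow> x \<in> D \<Longrightarrow> y \<in> D \<Longrightarrow> x \<noteq> y \<Longrightarrow> (x, y) \<in> other_darts"
  unfolding other_darts_def by blast

lemma other_darts_outside:
  "(x, y) \<in> other_darts \<Longrightarrow> x \<notin> {a, p, q, c, p', q'} \<and> y \<notin> {a, p, q, c, p', q'}"
  unfolding other_darts_def using corner_notin_other by blast

lemma tris_eq: "tris T = other_tris \<union> {{a, p, q}, {c, p', q'}}"
  using tri_left tri_right unfolding other_tris_def by blast

lemma tris_flipped: "tris flipped = other_tris \<union> {{a, p, c}, {q, p', q'}}"
  and glue_flipped: "glue flipped = flipped_glue"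
  unfolding flipped_def by simp_all

lemma tri_new: "{a, p, c} \<in> tris flipped" "{q, p', q'} \<in> tris flipped"
  by (simp_all add: tris_flipped)

lemma old_sides_darts: "old_sides \<subseteq> darts T"
  using tri_left tri_right corners_neq by (auto intro: in_dartsI)

lemma new_sides_darts: "new_sides \<subseteq> darts flipped"
  using tri_new corners_neq by (auto intro: in_dartsI)

lemma outer_darts: "darts T - old_diagonal = old_sides \<union> other_darts"
proof
  show "darts T - old_diagonal \<subseteq> old_sides \<union> other_darts"
  proof
    fix w assume w: "w \<in> darts T - old_diagonal"
    then obtain x y D where xy: "w = (x, y)" "x \<noteq> y" "D \<in> tris T" "x \<in> D" "y \<in> D"
      unfolding darts_def by auto
    consider "D = {a, p, q}" | "D = {c, p', q'}" | "D \<in> other_tris"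
      using xy(3) tris_eq by blast
    then show "w \<in> old_sides \<union> other_darts"
      by cases (use w xy other_dartsI in auto)
  qed
next
  have "other_darts \<subseteq> darts T"
    unfolding other_darts_def other_tris_def by (auto intro: in_dartsI)
  moreover have "old_diagonal \<inter> (old_sides \<union> other_darts) = {}"
    using corners_neq other_darts_outside by auto
  ultimately show "old_sides \<union> other_darts \<subseteq> darts T - old_diagonal"
    using old_sides_darts by blast
qed

lemma outer_darts_flipped: "darts flipped - new_diagonal = new_sides \<union> other_darts"
proof
  show "darts flipped - new_diagonal \<subseteq> new_sides \<union> other_darts"
  proof
    fix w assume w: "w \<in> darts flipped - new_diagonal"
    then obtain x y D where xy: "w = (x, y)" "x \<noteq> y" "D \<in> tris flipped" "x \<in> D" "y \<in> D"
      unfolding darts_def by auto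
    consider "D = {a, p, c}" | "D = {q, p', q'}" | "D \<in> other_tris"
      using xy(3) tris_flipped by blast
    then show "w \<in> new_sides \<union> other_darts"
      by cases (use w xy other_dartsI in auto)
  qed
next
  have "other_darts \<subseteq> darts flipped"
    unfolding other_darts_def by (auto intro: in_dartsI simp: tris_flipped)
  moreover have "new_diagonal \<inter> (new_sides \<union> other_darts) = {}"
    using corners_neq other_darts_outside by auto
  ultimately show "new_sides \<union> other_darts \<subseteq> darts flipped - new_diagonal"
    using new_sides_darts by blast
qed

lemma rho_sides:
  "rho (a, p) = (a, p)" "rho (p, a) = (p, a)" "rho (a, q) = (q, p')" "rho (q, a) = (p', q)"
  "rho (c, p') = (c, p)" "rho (p', c) = (p, c)" "rho (c, q') = (q', p')" "rho (q', c) = (p', q')"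
  unfolding rho_def flip_ren_def by (simp_all add: corners_neq)

lemma rho_back_sides:
  "rho_back (a, p) = (a, p)" "rho_back (p, a) = (p, a)"
  "rho_back (q, p') = (a, q)" "rho_back (p', q) = (q, a)"
  "rho_back (c, p) = (c, p')" "rho_back (p, c) = (p', c)"
  "rho_back (q', p') = (c, q')" "rho_back (p', q') = (q', c)"
  unfolding rho_back_def flip_ren_def by (simp_all add: corners_neq)

lemma rho_other: "w \<in> other_darts \<Longrightarrow> rho w = w"
  and rho_back_other: "w \<in> other_darts \<Longrightarrow> rho_back w = w"
  unfolding rho_def rho_back_def
  by (cases w; auto dest: other_darts_outside intro!: flip_ren_outside)+

lemma rho_back_swap: "rho_back (prod.swap w) = prod.swap (rho_back w)"
  unfolding rho_back_def by (rule flip_ren_swap) (simp add: corners_neq)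

lemma rho_outer:
  assumes "w \<in> darts T - old_diagonal"
  shows "rho w \<in> darts flipped - new_diagonal \<and> rho_back (rho w) = w"
proof -
  consider "w \<in> old_sides" | "w \<in> other_darts" using assms unfolding outer_darts by blast
  then show ?thesis
    by cases (auto simp: outer_darts_flipped rho_sides rho_back_sides rho_other rho_back_other)
qed

lemma rho_back_outer:
  assumes "w \<in> darts flipped - new_diagonal"
  shows "rho_back w \<in> darts T - old_diagonal \<and> rho (rho_back w) = w"
proof -
  consider "w \<in> new_sides" | "w \<in> other_darts" using assms unfolding outer_darts_flipped by blast
  then show ?thesis
    by cases (auto simp: outer_darts rho_sides rho_back_sides rho_other rho_back_other)
qed

lemma glue_outer: "w \<in> darts T - old_diagonal \<Longrightarrow> glue T w \<in> darts T - old_diagonal"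
  using wf_triang_glue[OF wf, of w] glue_pq glue_old_diagonal by auto

lemma glue_flipped_new_diagonal:
  "glue flipped (a, c) = (q, q')" "glue flipped (c, a) = (q', q)"
  "glue flipped (q, q') = (a, c)" "glue flipped (q', q) = (c, a)"
  unfolding glue_flipped flipped_glue_def by (simp_all add: corners_neq)

lemma glue_flipped_rho:
  "w \<in> darts T - old_diagonal \<Longrightarrow> glue flipped (rho w) = rho (glue T w)"
  using rho_outer unfolding glue_flipped flipped_glue_def by auto

lemma glue_flipped_outer:
  assumes "w \<in> darts flipped - new_diagonal"
  shows "glue flipped w \<in> darts flipped - new_diagonal"
    and "rho_back (glue flipped w) = glue T (rho_back w)"
proof -
  have u: "rho_back w \<in> darts T - old_diagonal" "rho (rho_back w) = w"
    using rho_back_outer[OF assms] by simp_all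
  have "glue flipped w = rho (glue T (rho_back w))"
    using glue_flipped_rho[OF u(1)] u(2) by simp
  with rho_outer[OF glue_outer[OF u(1)]]
  show "glue flipped w \<in> darts flipped - new_diagonal"
    and "rho_back (glue flipped w) = glue T (rho_back w)" by simp_all
qed

lemma untrapped_pq: "\<not> trapped T (p, q)"
proof
  assume "trapped T (p, q)"
  then obtain D where "D \<in> tris T" "p \<in> D" "p' \<in> D"
    unfolding trapped_def glue_pq by auto
  then show False
    using tris_eq corner_notin_other corners_neq by auto
qed

lemma untrapped_new_diagonal: "\<not> trapped flipped (a, c)"
proof
  assume "trapped flipped (a, c)"
  then obtain D where "D \<in> tris flipped" "a \<in> D" "q \<in> D"
    unfolding trapped_def glue_flipped_new_diagonal by auto
  then show False
    using tris_flipped corner_notin_other corners_neq by auto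
qed

lemma other_tris_avoid_corners: "{a, p, q, c, p', q'} \<inter> \<Union>other_tris = {}"
  using corner_notin_other by blast

lemma naked_flip_forward: "naked_flip T (p, q) flipped rho"
  unfolding naked_flip_def
  by (rule exI[of _ p], rule exI[of _ q], rule exI[of _ a], rule exI[of _ c],
      rule exI[of _ p'], rule exI[of _ q'], rule exI[of _ a], rule exI[of _ p],
      rule exI[of _ c], rule exI[of _ q], rule exI[of _ p'], rule exI[of _ q'])
    (use tri_left tri_right corners_neq glue_pq other_tris_avoid_corners glue_flipped_rho
       glue_flipped_new_diagonal in
     \<open>auto simp: tris_flipped other_tris_def edge_darts_pq rho_def\<close>)

lemma edge_darts_new_diagonal: "edge_darts flipped (a, c) = new_diagonal"
  unfolding edge_darts_def glue_flipped_new_diagonal by auto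

lemma flipped_minus_new_tris: "tris flipped - {{a, p, c}, {q, p', q'}} = other_tris"
proof -
  have "{a, p, c} \<notin> other_tris" "{q, p', q'} \<notin> other_tris"
    using corner_notin_other by blast+
  then show ?thesis unfolding tris_flipped by blast
qed

lemma naked_flip_back: "naked_flip flipped (a, c) T rho_back"
proof -
  have sets: "{p, a, c} = {a, p, c}" "{p', q, q'} = {q, p', q'}"
    "{p, a, q} = {a, p, q}" "{p', c, q'} = {c, p', q'}" by auto
  have new_tris_ne: "{a, p, c} \<noteq> {q, p', q'}" using corners_neq by auto
  show ?thesis
    unfolding naked_flip_def
    by (rule exI[of _ a], rule exI[of _ c], rule exI[of _ p], rule exI[of _ p'],
        rule exI[of _ q], rule exI[of _ q'], rule exI[of _ p], rule exI[of _ a],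
        rule exI[of _ q], rule exI[of _ p'], rule exI[of _ c], rule exI[of _ q'],
        simp only: sets)
      (use new_tris_ne tri_new corners_neq glue_pq glue_old_diagonal other_tris_avoid_corners
         glue_flipped_outer(2) glue_flipped_new_diagonal in
       \<open>auto simp: flipped_minus_new_tris tris_eq edge_darts_new_diagonal rho_back_def\<close>)
qed

lemma new_diagonal_darts: "new_diagonal \<subseteq> darts flipped"
  using tri_new corners_neq by (auto intro: in_dartsI)

lemma flipped_orientation_outer:
  "w \<in> darts flipped - new_diagonal \<Longrightarrow> w \<in> flipped_orientation b \<longleftrightarrow> rho_back w \<in> b"
  unfolding flipped_orientation_def by auto

lemma flipped_orientation_new_diagonal:
  "(a, c) \<in> flipped_orientation b \<longleftrightarrow> (a, p) \<in> b"
  "(c, a) \<in> flipped_orientation b \<longleftrightarrow> (a, p) \<notin> b"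
  "(q, q') \<in> flipped_orientation b \<longleftrightarrow> (a, p) \<in> b"
  "(q', q) \<in> flipped_orientation b \<longleftrightarrow> (a, p) \<notin> b"
  using new_diagonal_darts corners_neq unfolding flipped_orientation_def by auto

lemma flipped_orientation_sides:
  "(a, p) \<in> flipped_orientation b \<longleftrightarrow> (a, p) \<in> b"
  "(p, a) \<in> flipped_orientation b \<longleftrightarrow> (p, a) \<in> b"
  "(p, c) \<in> flipped_orientation b \<longleftrightarrow> (p', c) \<in> b"
  "(c, p) \<in> flipped_orientation b \<longleftrightarrow> (c, p') \<in> b"
  "(q, p') \<in> flipped_orientation b \<longleftrightarrow> (a, q) \<in> b"
  "(p', q) \<in> flipped_orientation b \<longleftrightarrow> (q, a) \<in> b"
  "(p', q') \<in> flipped_orientation b \<longleftrightarrow> (q', c) \<in> b"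
  "(q', p') \<in> flipped_orientation b \<longleftrightarrow> (c, q') \<in> b"
  using flipped_orientation_outer[of _ b] rho_back_sides outer_darts_flipped by auto

lemma is_orientation_flipped:
  assumes b: "is_orientation T b"
  shows "is_orientation flipped (flipped_orientation b)"
proof -
  have b_swap: "(u \<in> b) \<noteq> (prod.swap u \<in> b)" and b_glue: "u \<in> b \<longleftrightarrow> glue T u \<in> b"
    if "u \<in> darts T" for u
    using b that unfolding is_orientation_def by blast+
  have swap: "(w \<in> flipped_orientation b) \<noteq> (prod.swap w \<in> flipped_orientation b)"
    if w: "w \<in> darts flipped" for w
  proof (cases "w \<in> new_diagonal")
    case True
    then show ?thesis by (elim insertE emptyE) (simp_all add: flipped_orientation_new_diagonal)
  next
    case False
    then have "prod.swap w \<in> darts flipped - new_diagonal"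
      using swap_in_darts[OF w] by (cases w) auto
    moreover have "rho_back w \<in> darts T" using rho_back_outer w False by blast
    ultimately show ?thesis
      using w False b_swap flipped_orientation_outer rho_back_swap by simp
  qed
  have glue: "w \<in> flipped_orientation b \<longleftrightarrow> glue flipped w \<in> flipped_orientation b"
    if w: "w \<in> darts flipped" for w
  proof (cases "w \<in> new_diagonal")
    case True
    then show ?thesis
      by (elim insertE emptyE)
        (simp_all add: flipped_orientation_new_diagonal glue_flipped_new_diagonal)
  next
    case False
    then have w': "w \<in> darts flipped - new_diagonal" using w by blast
    then have "rho_back w \<in> darts T" using rho_back_outer by blast
    then show ?thesis
      using w' b_glue glue_flipped_outer flipped_orientation_outer by simp
  qed
  have "flipped_orientation b \<subseteq> darts flipped"
    unfolding flipped_orientation_def by blast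
  with swap glue show ?thesis unfolding is_orientation_def by blast
qed

lemma old_sides_orientation:
  assumes "is_orientation T b"
  shows "(p, a) \<in> b \<longleftrightarrow> (a, p) \<notin> b" "(c, p') \<in> b \<longleftrightarrow> (p', c) \<notin> b"
    "(q, a) \<in> b \<longleftrightarrow> (a, q) \<notin> b" "(c, q') \<in> b \<longleftrightarrow> (q', c) \<notin> b"
proof -
  have "(w \<in> b) \<noteq> (prod.swap w \<in> b)" if "w \<in> darts T" for w
    using assms that unfolding is_orientation_def by blast
  with old_sides_darts
  show "(p, a) \<in> b \<longleftrightarrow> (a, p) \<notin> b" "(c, p') \<in> b \<longleftrightarrow> (p', c) \<notin> b"
    "(q, a) \<in> b \<longleftrightarrow> (a, q) \<notin> b" "(c, q') \<in> b \<longleftrightarrow> (q', c) \<notin> b"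
    by (metis insert_subset swap_simp)+
qed

lemma is_branching_flipped:
  assumes b: "is_branching T b" and same_side: "(a, p) \<in> b \<longleftrightarrow> (a, q) \<in> b"
  shows "is_branching flipped (flipped_orientation b)"
  unfolding is_branching_def
proof (intro conjI ballI)
  have orient: "is_orientation T b" using b unfolding is_branching_def by blast
  then show "is_orientation flipped (flipped_orientation b)" by (rule is_orientation_flipped)
  fix D assume "D \<in> tris flipped"
  then consider "D \<in> other_tris" | "D = {a, p, c}" | "D = {q, p', q'}"
    using tris_flipped by blast
  then show "\<exists>r :: 'c \<Rightarrow> nat. inj_on r D \<and> (\<forall>x\<in>D. \<forall>y\<in>D. x \<noteq> y \<longrightarrow>
      ((x, y) \<in> flipped_orientation b \<longleftrightarrow> r x < r y))"
  proof cases
    case 1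
    then obtain r :: "'c \<Rightarrow> nat" where r: "inj_on r D"
      "\<forall>x\<in>D. \<forall>y\<in>D. x \<noteq> y \<longrightarrow> ((x, y) \<in> b \<longleftrightarrow> r x < r y)"
      using b unfolding is_branching_def other_tris_def by blast
    have "(x, y) \<in> flipped_orientation b \<longleftrightarrow> (x, y) \<in> b" if "x \<in> D" "y \<in> D" "x \<noteq> y" for x y
    proof -
      have "(x, y) \<in> other_darts" using 1 that by (rule other_dartsI)
      then show ?thesis
        using flipped_orientation_outer rho_back_other outer_darts_flipped by simp
    qed
    with r show ?thesis by (intro exI[of _ r]) simp
  next
    case 2
    show ?thesis unfolding 2
      by (rule acyclic_triangle_ranking)
        (simp_all add: corners_neq flipped_orientation_sides flipped_orientation_new_diagonal
          old_sides_orientation[OF orient])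
  next
    case 3
    show ?thesis unfolding 3
      by (rule acyclic_triangle_ranking)
        (simp_all add: corners_neq flipped_orientation_sides flipped_orientation_new_diagonal
          old_sides_orientation[OF orient] same_side)
  qed
qed

lemma b_flip_forward:
  assumes "is_branching T b" and "(a, p) \<in> b \<longleftrightarrow> (a, q) \<in> b"
  shows "b_flip T b flipped (flipped_orientation b)"
  unfolding b_flip_def
proof (intro exI conjI)
  show "(p, q) \<in> darts T" by (rule pq_in_darts)
  show "\<not> trapped T (p, q)" by (rule untrapped_pq)
  show "naked_flip T (p, q) flipped rho" by (rule naked_flip_forward)
  show "is_branching flipped (flipped_orientation b)" using assms by (rule is_branching_flipped)
  show "\<forall>w\<in>darts T - edge_darts T (p, q). w \<in> b \<longleftrightarrow> rho w \<in> flipped_orientation b"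
    unfolding edge_darts_pq using rho_outer flipped_orientation_outer by auto
qed

lemma b_flip_back:
  assumes "is_branching T b'" and agree: "\<forall>w\<in>darts T - old_diagonal. w \<in> b' \<longleftrightarrow> w \<in> b"
  shows "b_flip flipped (flipped_orientation b) T b'"
  unfolding b_flip_def
proof (intro exI conjI)
  show "(a, c) \<in> darts flipped" using new_diagonal_darts by blast
  show "\<not> trapped flipped (a, c)" by (rule untrapped_new_diagonal)
  show "naked_flip flipped (a, c) T rho_back" by (rule naked_flip_back)
  show "is_branching T b'" by fact
  show "\<forall>w\<in>darts flipped - edge_darts flipped (a, c).
      w \<in> flipped_orientation b \<longleftrightarrow> rho_back w \<in> b'"
    unfolding edge_darts_new_diagonal using rho_back_outer flipped_orientation_outer agree by auto
qed

end

lemma untrapped_edge_quadrilateral: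
  assumes wf: "wf_triang T" and e: "(p, q) \<in> darts T" and untrapped: "\<not> trapped T (p, q)"
  obtains a c p' q' where "quadrilateral T a p q c p' q'"
proof -
  obtain A where A: "A \<in> tris T" "p \<in> A" "q \<in> A" and "p \<noteq> q"
    using e unfolding darts_def by auto
  then obtain a where a: "A = {a, p, q}" "a \<notin> {p, q}"
    using card_3_obtain_third wf_triang_card[OF wf] by metis
  obtain p' q' where g: "glue T (p, q) = (p', q')" by fastforce
  have "(p', q') \<in> darts T" using wf_triang_glue(1)[OF wf e] g by simp
  then obtain C where C: "C \<in> tris T" "p' \<in> C" "q' \<in> C" and "p' \<noteq> q'"
    unfolding darts_def by auto
  then obtain c where c: "C = {c, p', q'}" "c \<notin> {p', q'}"
    using card_3_obtain_third wf_triang_card[OF wf] by metis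
  have "A \<noteq> C" using untrapped g A C unfolding trapped_def by auto
  then have "A \<inter> C = {}" using wf_triang_disjoint[OF wf A(1) C(1)] by blast
  then have "distinct [a, p, q, c, p', q']"
    using a c \<open>p \<noteq> q\<close> \<open>p' \<noteq> q'\<close> by auto
  with wf A(1) C(1) a c g show thesis
    by (intro that) (unfold_locales, auto)
qed

theorem lemma2p4:
  fixes T :: "'c triang" and b :: "('c \<times> 'c) set" and e :: "'c \<times> 'c"
  assumes "wf_triang T"
    and "is_branching T b"
    and "e \<in> darts T"
    and "ambiguous T b e"
    and "\<not> trapped T e"
  shows "\<exists>T1 b1. b_flip T b T1 b1 \<and> b_flip T1 b1 T (reverse_edge T b e)"
proof -
  obtain p q where e: "e = (p, q)" by fastforce
  obtain a c p' q' where "quadrilateral T a p q c p' q'"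
    using untrapped_edge_quadrilateral assms(1,3,5) unfolding e by metis
  then interpret quadrilateral T a p q c p' q' .
  have same_side: "(a, p) \<in> b \<longleftrightarrow> (a, q) \<in> b"
    using ambiguous_third_corner[OF assms(2) assms(4)[unfolded e] tri_left] corners_neq
    unfolding edge_darts_pq by auto
  have "b_flip T b flipped (flipped_orientation b)"
    using assms(2) same_side by (rule b_flip_forward)
  moreover have "b_flip flipped (flipped_orientation b) T (reverse_edge T b e)"
    using assms(4) unfolding ambiguous_def e
    by (rule b_flip_back) (auto simp: reverse_edge_def edge_darts_pq)
  ultimately show ?thesis by blast
qed

end
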